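(* Let $k,r,h$ be positive integers such that $\ell=\frac{k+h}{r}$ is an integer. Let $m$ be the smallest integer such that $r\mid m$ and $\ell\le 2^m$. Then there exists a maximally recoverable local $(k,r,h)$-code over the field $\mathbb{F}_{2^t}$, where $t=r+m\left\lceil (h-1)\left(1-\frac{1}{2^r}\right)\right\rceil$.
   Context: For positive integers $k,r,h$ with $r\mid(k+h)$, a local $(k,r,h)$-code over a finite field $\mathbb{F}$ is a linear systematic code of dimension $k$ and length $k+h+\frac{k+h}{r}$ consisting of $k$ data symbols, $h$ heavy parity symbols (each a fixed $\mathbb{F}$-linear combination of all data symbols), and, after partitioning the $k+h$ data and heavy parity symbols into $\frac{k+h}{r}$ groups of size $r$, one local parity per group equal to the sum (XOR) of the group's symbols. A local group is such a group together with its local parity. The code is maximally recoverable if for every set $E$ of coordinates containing exactly one coordinate from each local group, puncturing the code in $E$ (deleting those coordinates) yields a maximum distance separable $[k+h,k]$ code (minimum distance $h+1$). *)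

theory Defs
  imports Complex_Main
begin

text \<open>Coordinates of a local (k,r,h)-code: 0..<k data symbols, k..<k+h heavy parities,
  k+h..<k+h+(k+h)/r local parities (local parity of group g at k+h+g).
  P j i (j<h, i<k) is the coefficient of data symbol i in heavy parity j.
  grp i (i<k+h) is the group of symbol i.\<close>

definition messages :: "nat \<Rightarrow> (nat \<Rightarrow> 'a::field) set" where
  "messages k = {x. \<forall>i. k \<le> i \<longrightarrow> x i = 0}"

definition num_groups :: "nat \<Rightarrow> nat \<Rightarrow> nat \<Rightarrow> nat" where
  "num_groups k r h = (k + h) div r"

definition code_length :: "nat \<Rightarrow> nat \<Rightarrow> nat \<Rightarrow> nat" where
  "code_length k r h = k + h + num_groups k r h"

definition sym_val :: "nat \<Rightarrow> (nat \<Rightarrow> nat \<Rightarrow> 'a::field) \<Rightarrow> (nat \<Rightarrow> 'a) \<Rightarrow> nat \<Rightarrow> 'a" where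
  "sym_val k P x i = (if i < k then x i else (\<Sum>j<k. P (i - k) j * x j))"

definition group_members :: "nat \<Rightarrow> nat \<Rightarrow> (nat \<Rightarrow> nat) \<Rightarrow> nat \<Rightarrow> nat set" where
  "group_members k h grp g = {i. i < k + h \<and> grp i = g}"

definition encode :: "nat \<Rightarrow> nat \<Rightarrow> nat \<Rightarrow> (nat \<Rightarrow> nat \<Rightarrow> 'a::field) \<Rightarrow> (nat \<Rightarrow> nat)
    \<Rightarrow> (nat \<Rightarrow> 'a) \<Rightarrow> nat \<Rightarrow> 'a" where
  "encode k r h P grp x i =
     (if i < k + h then sym_val k P x i
      else if i < code_length k r h then
        (\<Sum>j\<in>group_members k h grp (i - (k + h)). sym_val k P x j)
      else 0)"

definition local_group :: "nat \<Rightarrow> nat \<Rightarrow> (nat \<Rightarrow> nat) \<Rightarrow> nat \<Rightarrow> nat set" where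
  "local_group k h grp g = group_members k h grp g \<union> {k + h + g}"

definition valid_partition :: "nat \<Rightarrow> nat \<Rightarrow> nat \<Rightarrow> (nat \<Rightarrow> nat) \<Rightarrow> bool" where
  "valid_partition k r h grp \<longleftrightarrow>
     (\<forall>i < k + h. grp i < num_groups k r h) \<and>
     (\<forall>g < num_groups k r h. card (group_members k h grp g) = r)"

definition punct_weight :: "nat \<Rightarrow> nat set \<Rightarrow> (nat \<Rightarrow> 'a::zero) \<Rightarrow> nat" where
  "punct_weight n E c = card {i. i < n \<and> i \<notin> E \<and> c i \<noteq> 0}"

text \<open>The code punctured in E is an MDS [k+h,k] code: it has dimension k (puncturing is
  injective on the code, equivalently on messages since the code is systematic) and
  minimum distance h+1.\<close>
definition punctured_MDS :: "nat \<Rightarrow> nat \<Rightarrow> nat \<Rightarrow> (nat \<Rightarrow> nat \<Rightarrow> 'a::field) \<Rightarrow> (nat \<Rightarrow> nat)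
    \<Rightarrow> nat set \<Rightarrow> bool" where
  "punctured_MDS k r h P grp E \<longleftrightarrow>
     (\<forall>x\<in>messages k. (\<forall>i. i < code_length k r h \<and> i \<notin> E \<longrightarrow> encode k r h P grp x i = 0)
         \<longrightarrow> x = (\<lambda>_. 0)) \<and>
     Min {punct_weight (code_length k r h) E (encode k r h P grp x) | x.
            x \<in> messages k \<and> x \<noteq> (\<lambda>_. 0)} = h + 1"

definition max_recoverable_local_code :: "nat \<Rightarrow> nat \<Rightarrow> nat \<Rightarrow> (nat \<Rightarrow> nat \<Rightarrow> 'a::field)
    \<Rightarrow> (nat \<Rightarrow> nat) \<Rightarrow> bool" where
  "max_recoverable_local_code k r h P grp \<longleftrightarrow>
     valid_partition k r h grp \<and>
     (\<forall>E. E \<subseteq> {..<code_length k r h} \<and>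
          (\<forall>g < num_groups k r h. card (E \<inter> local_group k h grp g) = 1)
          \<longrightarrow> punctured_MDS k r h P grp E)"

definition m_param :: "nat \<Rightarrow> nat \<Rightarrow> nat \<Rightarrow> nat" where
  "m_param k r h = (LEAST m. r dvd m \<and> num_groups k r h \<le> 2 ^ m)"

definition t_param :: "nat \<Rightarrow> nat \<Rightarrow> nat \<Rightarrow> nat" where
  "t_param k r h = r + m_param k r h *
      nat \<lceil>(real h - 1) * (1 - 1 / 2 ^ r)\<rceil>"

end

theory Submission
  imports Defs "HOL-Algebra.Algebraic_Closure_Type" "HOL-Computational_Algebra.Primes"
    "HOL-Library.Z2" "HOL-Library.Disjoint_Sets"
begin

text \<open>
  Give each data and heavy coordinate \<open>u\<close> a label \<open>\<lambda>\<^sub>u\<close> in the code field \<open>F = GF(2\<^sup>t)\<close>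
  (local parities get \<open>0\<close>) and choose the heavy parities so that every codeword satisfies the
  checks \<open>\<Sum>\<^sub>u c\<^sub>u \<lambda>\<^sub>u\<^bsup>2^s\<^esup> = 0\<close> for \<open>s < h\<close>; this is possible because the heavy labels are
  independent over \<open>F\<^sub>2\<close>, which makes the Moore matrix \<open>(\<lambda>\<^bsub>k+d\<^esub>\<^bsup>2^s\<^esup>)\<close> invertible. If \<open>e(g)\<close> is
  erased in every group \<open>g\<close>, adding \<open>\<lambda>\<^bsub>e(g)\<^esub>\<^bsup>2^s\<^esup>\<close> times the local checks turns these into checks
  with the labels \<open>\<lambda>\<^sub>u + \<lambda>\<^bsub>e(g(u))\<^esub>\<close>, which vanish on the erased coordinates. If any \<open>h\<close> of
  these shifted labels are independent over \<open>F\<^sub>2\<close>, the Moore system kills every codeword with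
  at most \<open>h\<close> nonzero unerased coordinates, so the punctured code has distance \<open>h + 1\<close>.

  Such labels are \<open>\<lambda>\<^sub>u = \<Phi>(\<beta>\<^sub>i, (\<beta>\<^sub>i \<alpha>\<^sub>g\<^bsup>e\<^esup>)\<^sub>e)\<close> for the \<open>i\<close>-th symbol of group \<open>g\<close>: \<open>\<beta>\<close> is an
  \<open>F\<^sub>2\<close>-basis of \<open>GF(2\<^sup>r)\<close>, the \<open>\<alpha>\<^sub>g\<close> are distinct elements of \<open>GF(2\<^sup>m)\<close>, \<open>e\<close> runs over the
  exponents below \<open>h\<close> not divisible by \<open>2\<^sup>r\<close>, and \<open>\<Phi>\<close> is an \<open>F\<^sub>2\<close>-linear injection into \<open>F\<close>,
  which exists since \<open>r + m w \<le> t\<close> for the number \<open>w\<close> of such exponents. A vanishing sum of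
  shifted labels gives relations \<open>\<Sum>\<^sub>g \<gamma>\<^sub>g \<alpha>\<^sub>g\<^bsup>e\<^esup> = 0\<close> with \<open>\<gamma>\<^sub>g \<in> GF(2\<^sup>r)\<close>; Frobenius powers supply
  the missing exponents, Vandermonde forces all \<open>\<gamma>\<^sub>g = 0\<close>, and this contradicts the independence
  of the \<open>\<beta>\<^sub>i\<close> within a group.
\<close>

section \<open>Fields of characteristic two\<close>

lemma CHAR_bit: "CHAR(bit) = 2"
  by (rule CHAR_eq_posI) (auto simp: less_2_cases_iff)

lemma even_card_involution:
  assumes "finite A" "\<And>x. x \<in> A \<Longrightarrow> h x \<in> A" "\<And>x. x \<in> A \<Longrightarrow> h (h x) = x"
    "\<And>x. x \<in> A \<Longrightarrow> h x \<noteq> x"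
  shows "even (card A)"
proof -
  have "(\<Sum>x\<in>A. 1::bit) = 0"
    by (rule sum_involution_eq_0[where h = h]) (use assms in auto)
  then show ?thesis
    using of_nat_eq_0_iff_char_dvd[where ?'a = bit, of "card A"] by (simp add: CHAR_bit)
qed

lemma card_pow2_imp_CHAR_2:
  assumes "card (UNIV :: 'a::field set) = 2 ^ t" "0 < t"
  shows "CHAR('a) = 2"
proof -
  have "(2::'a) = 0"
  proof (rule ccontr)
    assume two: "(2::'a) \<noteq> 0"
    \<comment> \<open>Then \<open>x \<mapsto> -x\<close> pairs off the odd number \<open>2\<^sup>t - 1\<close> of nonzero elements.\<close>
    have "finite (UNIV :: 'a set)"
      using assms(1) by (intro card_ge_0_finite) simp
    moreover have "- x \<noteq> x" if "x \<noteq> 0" for x :: 'a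
    proof
      assume "- x = x"
      then have "2 * x = 0" by (metis mult_2 add.right_inverse)
      with two that show False by simp
    qed
    ultimately have "even (card (UNIV - {0::'a}))"
      by (intro even_card_involution[where h = uminus]) auto
    with assms show False
      by (simp add: card_Diff_singleton)
  qed
  then show ?thesis
    by (intro CHAR_eq_posI) (auto simp: less_2_cases_iff)
qed

section \<open>Independence over \<open>F\<^sub>2\<close> and Moore systems\<close>

definition F2_independent :: "('i \<Rightarrow> 'a::comm_monoid_add) \<Rightarrow> 'i set \<Rightarrow> bool" where
  "F2_independent v S \<longleftrightarrow> (\<forall>U\<subseteq>S. U \<noteq> {} \<longrightarrow> sum v U \<noteq> 0)"

lemma F2_independent_subset: "F2_independent v S \<Longrightarrow> T \<subseteq> S \<Longrightarrow> F2_independent v T"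
  unfolding F2_independent_def by blast

lemma F2_independentD:
  "F2_independent v S \<Longrightarrow> U \<subseteq> S \<Longrightarrow> sum v U = 0 \<Longrightarrow> U = {}"
  unfolding F2_independent_def by blast

lemma F2_independent_nonzero: "F2_independent v S \<Longrightarrow> x \<in> S \<Longrightarrow> v x \<noteq> 0"
  using F2_independentD[of v S "{x}"] by auto

lemma F2_independent_reindex:
  assumes "inj_on f A" "F2_independent v (f ` A)"
  shows "F2_independent (\<lambda>x. v (f x)) A"
  unfolding F2_independent_def
proof (intro allI impI)
  fix U assume U: "U \<subseteq> A" "U \<noteq> {}"
  have "(\<Sum>x\<in>U. v (f x)) = sum v (f ` U)"
    using sum.reindex[OF inj_on_subset[OF assms(1) U(1)], of v] by (simp add: o_def)
  moreover have "f ` U \<subseteq> f ` A" "f ` U \<noteq> {}"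
    using U by auto
  ultimately show "(\<Sum>x\<in>U. v (f x)) \<noteq> 0"
    using F2_independentD[OF assms(2)] by metis
qed

lemma F2_independent_cong:
  "F2_independent v S \<Longrightarrow> (\<And>x. x \<in> S \<Longrightarrow> v x = w x) \<Longrightarrow> F2_independent w S"
  unfolding F2_independent_def by (metis subset_iff sum.cong)

context
  assumes char2: "CHAR('a::field) = 2"
begin

lemma char2_add_self [simp]: "(x::'a) + x = 0"
  using uminus_CHAR_2[OF char2, of x] by (metis add.right_inverse)

lemma char2_of_nat_mult: "of_nat n * (x::'a) = (if even n then 0 else x)"
  by (induction n) (auto simp: algebra_simps)

lemma frobenius_add: "((x::'a) + y) ^ (2 ^ n) = x ^ (2 ^ n) + y ^ (2 ^ n)"
  by (rule freshmans_dream') (simp_all add: char2)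

lemma frobenius_sum: "(\<Sum>i\<in>A. f i :: 'a) ^ (2 ^ n) = (\<Sum>i\<in>A. f i ^ (2 ^ n))"
  by (rule freshmans_dream_sum') (simp_all add: char2)

lemma sum_sym_diff:
  assumes "finite A" "finite B"
  shows "sum (f :: _ \<Rightarrow> 'a) (sym_diff A B) = sum f A + sum f B"
proof -
  have "sum f (sym_diff A B) = sum f (A - B) + sum f (B - A)"
    using assms by (intro sum.union_disjoint) auto
  also have "\<dots> = sum f (A - B) + sum f (B - A) + (sum f (A \<inter> B) + sum f (A \<inter> B))"
    by simp
  also have "\<dots> = sum f A + sum f B"
    using sum.Int_Diff[OF assms(1), of f B] sum.Int_Diff[OF assms(2), of f A]
    by (simp add: algebra_simps Int_commute)
  finally show ?thesis .
qed

lemma F2_independent_sum_inj: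
  fixes v :: "'i \<Rightarrow> 'a"
  assumes "F2_independent v S" "finite S" "U \<subseteq> S" "U' \<subseteq> S" "sum v U = sum v U'"
  shows "U = U'"
proof -
  have "finite U" "finite U'"
    using assms(2-4) finite_subset by blast+
  then have "sum v (sym_diff U U') = sum v U + sum v U'"
    by (rule sum_sym_diff)
  also have "\<dots> = 0"
    using assms(5) by simp
  finally have "sum v (sym_diff U U') = 0" .
  moreover have "sym_diff U U' \<subseteq> S"
    using assms(3,4) by auto
  ultimately have "sym_diff U U' = {}"
    using F2_independentD[OF assms(1)] by blast
  then show ?thesis by auto
qed

lemma F2_independent_extend:
  fixes B :: "nat \<Rightarrow> 'a"
  assumes "F2_independent B {..<d}" "v \<notin> sum B ` Pow {..<d}"
  shows "F2_independent (B(d := v)) {..<Suc d}"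
  unfolding F2_independent_def
proof (intro allI impI)
  fix U assume U: "U \<subseteq> {..<Suc d}" "U \<noteq> {}"
  show "sum (B(d := v)) U \<noteq> 0"
  proof (cases "d \<in> U")
    case False
    then have "U \<subseteq> {..<d}"
      using U(1) by (auto simp: less_Suc_eq)
    moreover have "sum (B(d := v)) U = sum B U"
      using False by (intro sum.cong) auto
    ultimately show ?thesis
      using F2_independentD[OF assms(1)] U(2) by auto
  next
    case True
    have "U - {d} \<subseteq> {..<d}"
      using U(1) by auto
    then have "v \<noteq> - sum B (U - {d})"
      using assms(2) by (subst uminus_CHAR_2[OF char2]) auto
    moreover have "sum (B(d := v)) U = v + sum B (U - {d})"
      using True finite_subset[OF U(1)] by (simp add: sum.remove)
    ultimately show ?thesis
      by (simp add: add_eq_0_iff2)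
  qed
qed

lemma ex_F2_independent:
  fixes V :: "'a set"
  assumes "finite V" "2 ^ d \<le> card V"
  shows "\<exists>B. (\<forall>i<d. B i \<in> V) \<and> F2_independent B {..<d}"
  using assms(2)
proof (induction d)
  case 0
  show ?case by (auto simp: F2_independent_def)
next
  case (Suc d)
  then obtain B where B: "\<forall>i<d. B i \<in> V" "F2_independent B {..<d}"
    by force
  have "card (sum B ` Pow {..<d}) \<le> 2 ^ d"
    using card_image_le[of "Pow {..<d}" "sum B"] by (simp add: card_Pow)
  also have "\<dots> < 2 ^ Suc d"
    by simp
  also have "\<dots> \<le> card V"
    using Suc.prems by simp
  finally have "\<not> V \<subseteq> sum B ` Pow {..<d}"
    using card_mono[of "sum B ` Pow {..<d}" V] by auto
  then obtain v where v: "v \<in> V" "v \<notin> sum B ` Pow {..<d}"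
    by blast
  then have "F2_independent (B(d := v)) {..<Suc d}"
    using B(2) by (intro F2_independent_extend)
  moreover have "\<forall>i<Suc d. (B(d := v)) i \<in> V"
    using B(1) v(1) by (simp add: less_Suc_eq)
  ultimately show ?case
    by blast
qed

lemma F2_independent_moore_step:
  fixes \<delta> :: "'i \<Rightarrow> 'a"
  assumes "finite S" "v \<notin> S" "F2_independent \<delta> (insert v S)"
  shows "F2_independent (\<lambda>u. \<delta> u ^ 2 + \<delta> v * \<delta> u) S"
  unfolding F2_independent_def
proof (intro allI impI)
  fix U assume U: "U \<subseteq> S" "U \<noteq> {}"
  define D where "D = sum \<delta> U"
  have "(\<Sum>u\<in>U. \<delta> u ^ 2 + \<delta> v * \<delta> u) = (\<Sum>u\<in>U. \<delta> u ^ 2) + \<delta> v * D"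
    by (simp add: D_def sum.distrib sum_distrib_left)
  also have "(\<Sum>u\<in>U. \<delta> u ^ 2) = D ^ 2"
    using frobenius_sum[of \<delta> U 1] by (simp add: D_def)
  finally have sum_eq: "(\<Sum>u\<in>U. \<delta> u ^ 2 + \<delta> v * \<delta> u) = D * (D + \<delta> v)"
    by (simp add: algebra_simps power2_eq_square)
  have "D \<noteq> 0"
    using F2_independentD[OF assms(3), of U] U by (auto simp: D_def)
  moreover have "finite U" "v \<notin> U"
    using U(1) assms(1,2) finite_subset by auto
  then have "D + \<delta> v = sum \<delta> (insert v U)"
    by (simp add: D_def add.commute)
  then have "D + \<delta> v \<noteq> 0"
    using F2_independentD[OF assms(3), of "insert v U"] U(1) by auto
  ultimately show "(\<Sum>u\<in>U. \<delta> u ^ 2 + \<delta> v * \<delta> u) \<noteq> 0"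
    using sum_eq by simp
qed

lemma moore_coeffs_zero:
  fixes \<delta> c :: "'i \<Rightarrow> 'a"
  assumes "finite S" "card S \<le> n" "F2_independent \<delta> S"
    and "\<forall>e<n. (\<Sum>u\<in>S. c u * \<delta> u ^ (2 ^ e)) = 0"
  shows "\<forall>u\<in>S. c u = 0"
  using assms
proof (induction S arbitrary: n c \<delta> rule: finite_induct)
  case empty
  then show ?case by simp
next
  case (insert v S)
  obtain n' where n: "n = Suc n'"
    using insert(1,2,4) by (cases n) auto
  \<comment> \<open>Eliminating \<open>\<delta> v\<close>: the Moore relations for \<open>\<epsilon>\<close> with exponents below \<open>n'\<close>
    follow from those for \<open>\<delta>\<close>.\<close>
  define \<epsilon> where "\<epsilon> u = \<delta> u ^ 2 + \<delta> v * \<delta> u" for u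
  have "F2_independent \<epsilon> S"
    unfolding \<epsilon>_def using insert(1,2,5) by (rule F2_independent_moore_step)
  moreover have eqs: "(\<Sum>u\<in>S. c u * \<delta> u ^ (2 ^ e)) = c v * \<delta> v ^ (2 ^ e)" if "e < n" for e
  proof -
    have "c v * \<delta> v ^ (2 ^ e) + (\<Sum>u\<in>S. c u * \<delta> u ^ (2 ^ e)) = 0"
      using insert(6) that insert(1,2) by simp
    then show ?thesis
      using uminus_CHAR_2[OF char2, of "c v * \<delta> v ^ (2 ^ e)"] by (simp add: add_eq_0_iff)
  qed
  have "\<forall>e<n'. (\<Sum>u\<in>S. c u * \<epsilon> u ^ (2 ^ e)) = 0"
  proof (intro allI impI)
    fix e assume e: "e < n'"
    have pw: "\<epsilon> u ^ (2 ^ e) = \<delta> u ^ (2 ^ Suc e) + \<delta> v ^ (2 ^ e) * \<delta> u ^ (2 ^ e)" for u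
      unfolding \<epsilon>_def frobenius_add
      by (simp add: power_mult[symmetric] power_mult_distrib mult.commute)
    have "(\<Sum>u\<in>S. c u * \<epsilon> u ^ (2 ^ e)) =
        (\<Sum>u\<in>S. c u * \<delta> u ^ (2 ^ Suc e)) + \<delta> v ^ (2 ^ e) * (\<Sum>u\<in>S. c u * \<delta> u ^ (2 ^ e))"
      by (simp add: pw sum.distrib sum_distrib_left algebra_simps)
    also have "\<dots> = c v * \<delta> v ^ (2 ^ Suc e) + \<delta> v ^ (2 ^ e) * (c v * \<delta> v ^ (2 ^ e))"
      using eqs[of e] eqs[of "Suc e"] e n by simp
    also have "\<dots> = 0"
    proof -
      have "\<delta> v ^ (2 ^ Suc e) = \<delta> v ^ (2 ^ e) * \<delta> v ^ (2 ^ e)"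
        by (simp add: power_add[symmetric] mult_2)
      then show ?thesis
        using char2_add_self[of "c v * \<delta> v ^ (2 ^ e) * \<delta> v ^ (2 ^ e)"] by (simp add: algebra_simps)
    qed
    finally show "(\<Sum>u\<in>S. c u * \<epsilon> u ^ (2 ^ e)) = 0" .
  qed
  moreover have "card S \<le> n'"
    using insert(1,2,4) n by simp
  ultimately have S0: "\<forall>u\<in>S. c u = 0"
    using insert.IH by blast
  have "c v * \<delta> v = 0"
    using eqs[of 0] n S0 by simp
  moreover have "\<delta> v \<noteq> 0"
    using F2_independent_nonzero[OF insert(5)] by simp
  ultimately show ?case
    using S0 by simp
qed

lemma sum_frobenius_power_eq_0:
  assumes "\<forall>g\<in>G. \<gamma> g ^ (2 ^ n) = \<gamma> g" "(\<Sum>g\<in>G. \<gamma> g * \<alpha> g ^ e :: 'a) = 0"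
  shows "(\<Sum>g\<in>G. \<gamma> g * \<alpha> g ^ (e * 2 ^ n)) = 0"
proof -
  have "(\<Sum>g\<in>G. \<gamma> g * \<alpha> g ^ e) ^ (2 ^ n) = (\<Sum>g\<in>G. \<gamma> g ^ (2 ^ n) * \<alpha> g ^ (e * 2 ^ n))"
    by (simp add: frobenius_sum power_mult_distrib flip: power_mult)
  with assms show ?thesis
    by (simp add: power_0_left)
qed

lemma sum_shift_nonzero:
  assumes "F2_independent b (A - {z})" "b z = (0::'a)" "finite A"
    and "U \<subseteq> A" "U \<noteq> {}" "v \<in> A" "v \<notin> U"
  shows "(\<Sum>u\<in>U. b u + b v) \<noteq> 0"
proof -
  \<comment> \<open>Up to the zero label \<open>z\<close>, the sum is \<open>\<Sum> b\<close> over \<open>U\<close> or over \<open>U + v\<close>, whichever has even size.\<close>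
  have nonzero: "sum b W \<noteq> 0" if "W \<subseteq> A" "2 \<le> card W" for W
  proof -
    have finW: "finite W"
      using that(1) assms(3) by (rule finite_subset)
    have "\<not> W \<subseteq> {z}"
      using that(2) card_mono[of "{z}" W] by auto
    then have "W - {z} \<noteq> {}" "W - {z} \<subseteq> A - {z}"
      using that(1) by blast+
    then have "sum b (W - {z}) \<noteq> 0"
      using F2_independentD[OF assms(1)] by blast
    moreover have "sum b W = sum b (W - {z})"
      using finW assms(2) by (cases "z \<in> W") (simp_all add: sum.remove)
    ultimately show ?thesis
      by simp
  qed
  have finU: "finite U"
    using assms(3,4) finite_subset by blast
  have "(\<Sum>u\<in>U. b u + b v) = sum b U + of_nat (card U) * b v"
    by (simp add: sum.distrib)
  also have "\<dots> = (if even (card U) then sum b U else sum b (insert v U))"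
    using assms(7) finU by (simp add: char2_of_nat_mult add.commute)
  also have "\<dots> \<noteq> 0"
  proof (cases "even (card U)")
    case True
    moreover have "card U \<noteq> 0"
      using finU assms(5) by simp
    ultimately have "2 \<le> card U"
      by presburger
    with True show ?thesis
      using nonzero[OF assms(4)] by simp
  next
    case False
    moreover have "2 \<le> card (insert v U)"
      using finU assms(5,7) by (simp add: card_gt_0_iff Suc_le_eq)
    moreover have "insert v U \<subseteq> A"
      using assms(4,6) by blast
    ultimately show ?thesis
      using nonzero by simp
  qed
  finally show ?thesis .
qed

end

lemma vandermonde_coeffs_zero:
  fixes \<gamma> \<alpha> :: "'i \<Rightarrow> 'a::field"
  assumes "finite G" "inj_on \<alpha> G" "card G \<le> n"
    and "\<forall>e<n. (\<Sum>g\<in>G. \<gamma> g * \<alpha> g ^ e) = 0"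
  shows "\<forall>g\<in>G. \<gamma> g = 0"
  using assms
proof (induction G arbitrary: n \<gamma> rule: finite_induct)
  case empty
  then show ?case by simp
next
  case (insert v S)
  obtain n' where n: "n = Suc n'"
    using insert(1,2,5) by (cases n) auto
  have eqs: "(\<Sum>u\<in>S. \<gamma> u * \<alpha> u ^ e) = - (\<gamma> v * \<alpha> v ^ e)" if "e < n" for e
    using insert(6) that insert(1,2) by (simp add: eq_neg_iff_add_eq_0 add.commute)
  \<comment> \<open>Multiplying by \<open>X - \<alpha> v\<close> removes \<open>v\<close> and lowers the number of relations by one.\<close>
  define \<gamma>' where "\<gamma>' u = \<gamma> u * (\<alpha> u - \<alpha> v)" for u
  have "\<forall>e<n'. (\<Sum>u\<in>S. \<gamma>' u * \<alpha> u ^ e) = 0"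
  proof (intro allI impI)
    fix e assume e: "e < n'"
    have "(\<Sum>u\<in>S. \<gamma>' u * \<alpha> u ^ e) =
        (\<Sum>u\<in>S. \<gamma> u * \<alpha> u ^ Suc e) - \<alpha> v * (\<Sum>u\<in>S. \<gamma> u * \<alpha> u ^ e)"
      by (simp add: \<gamma>'_def sum_subtractf sum_distrib_left algebra_simps)
    also have "\<dots> = 0"
      using eqs[of e] eqs[of "Suc e"] e n by (simp add: algebra_simps)
    finally show "(\<Sum>u\<in>S. \<gamma>' u * \<alpha> u ^ e) = 0" .
  qed
  moreover have "inj_on \<alpha> S" "card S \<le> n'"
    using insert(1,2,4,5) n by auto
  ultimately have "\<forall>u\<in>S. \<gamma>' u = 0"
    using insert.IH by blast
  moreover have "\<alpha> u \<noteq> \<alpha> v" if "u \<in> S" for u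
    using insert(2,4) that by (auto simp: inj_on_def)
  ultimately have S0: "\<forall>u\<in>S. \<gamma> u = 0"
    by (auto simp: \<gamma>'_def)
  then have "\<gamma> v = 0"
    using eqs[of 0] n by simp
  with S0 show ?case
    by simp
qed

lemma finite_funs_vanishing_from:
  "finite {y :: nat \<Rightarrow> 'a::{finite,zero}. \<forall>d\<ge>n. y d = 0}"
proof -
  have "{y :: nat \<Rightarrow> 'a. \<forall>d\<ge>n. y d = 0} =
      {y. \<forall>d. (d \<in> {..<n} \<longrightarrow> y d \<in> UNIV) \<and> (d \<notin> {..<n} \<longrightarrow> y d = 0)}"
    by auto
  then show ?thesis
    using finite_set_of_finite_funs[of "{..<n}" "UNIV :: 'a set" 0] by simp
qed

lemma moore_system_solvable:
  fixes v :: "nat \<Rightarrow> 'a::{field,finite}"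
  assumes char2: "CHAR('a) = 2" and indep: "F2_independent v {..<n}"
  shows "\<exists>y. \<forall>s<n. (\<Sum>d<n. y d * v d ^ (2 ^ s)) = z s"
proof -
  define D where "D = {y :: nat \<Rightarrow> 'a. \<forall>d\<ge>n. y d = 0}"
  define F where "F y = (\<lambda>s. if s < n then (\<Sum>d<n. y d * v d ^ (2 ^ s)) else 0)" for y
  have "inj_on F D"
  proof (rule inj_onI)
    fix y y' assume y: "y \<in> D" "y' \<in> D" "F y = F y'"
    have "\<forall>s<n. (\<Sum>d\<in>{..<n}. (y d - y' d) * v d ^ (2 ^ s)) = 0"
    proof (intro allI impI)
      fix s assume "s < n"
      then have "(\<Sum>d<n. y d * v d ^ (2 ^ s)) = (\<Sum>d<n. y' d * v d ^ (2 ^ s))"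
        using fun_cong[OF y(3), of s] by (simp add: F_def)
      then show "(\<Sum>d\<in>{..<n}. (y d - y' d) * v d ^ (2 ^ s)) = 0"
        by (simp add: left_diff_distrib sum_subtractf)
    qed
    then have "\<forall>d<n. y d = y' d"
      using moore_coeffs_zero[OF char2, of "{..<n}" n v "\<lambda>d. y d - y' d"] indep by simp
    show "y = y'"
    proof
      fix d
      show "y d = y' d"
        using \<open>\<forall>d<n. y d = y' d\<close> y(1,2) unfolding D_def by (cases "d < n") auto
    qed
  qed
  moreover have "finite D"
    unfolding D_def by (rule finite_funs_vanishing_from)
  moreover have "F ` D \<subseteq> D"
    unfolding D_def F_def by auto
  ultimately have "F ` D = D"
    by (intro endo_inj_surj)
  moreover have "(\<lambda>s. if s < n then z s else 0) \<in> D"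
    by (simp add: D_def)
  ultimately obtain y where "F y = (\<lambda>s. if s < n then z s else 0)"
    by (metis imageE)
  then have "F y s = z s" if "s < n" for s
    using that by simp
  then show ?thesis
    unfolding F_def by auto
qed

locale F2_basis =
  fixes V :: "'a::field set" and B :: "nat \<Rightarrow> 'a" and d :: nat
  assumes char2: "CHAR('a) = 2"
    and finite_V: "finite V" and card_V: "card V = 2 ^ d"
    and zero_in_V: "0 \<in> V" and add_in_V: "x \<in> V \<Longrightarrow> y \<in> V \<Longrightarrow> x + y \<in> V"
    and basis_in_V: "i < d \<Longrightarrow> B i \<in> V"
    and independent: "F2_independent B {..<d}"
begin

lemma sum_in_V: "finite U \<Longrightarrow> (\<And>i. i \<in> U \<Longrightarrow> f i \<in> V) \<Longrightarrow> sum f U \<in> V"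
  by (induction U rule: finite_induct) (auto intro: zero_in_V add_in_V)

lemma spans: "y \<in> V \<Longrightarrow> \<exists>U\<subseteq>{..<d}. sum B U = y"
proof -
  assume y: "y \<in> V"
  have "inj_on (sum B) (Pow {..<d})"
    by (rule inj_onI) (use F2_independent_sum_inj[OF char2 independent] in auto)
  then have "card (sum B ` Pow {..<d}) = card V"
    by (simp add: card_image card_Pow card_V)
  moreover have "sum B U \<in> V" if "U \<subseteq> {..<d}" for U
    using that basis_in_V finite_subset[OF that] by (intro sum_in_V) auto
  then have "sum B ` Pow {..<d} \<subseteq> V"
    by blast
  ultimately have "sum B ` Pow {..<d} = V"
    using finite_V by (metis card_subset_eq)
  with y show ?thesis by auto
qed

definition coords :: "'a \<Rightarrow> nat set" where
  "coords y = (THE U. U \<subseteq> {..<d} \<and> sum B U = y)"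

lemma coords: "y \<in> V \<Longrightarrow> coords y \<subseteq> {..<d} \<and> sum B (coords y) = y"
  unfolding coords_def
proof (rule theI')
  assume "y \<in> V"
  then obtain U where "U \<subseteq> {..<d}" "sum B U = y"
    using spans by blast
  then show "\<exists>!U. U \<subseteq> {..<d} \<and> sum B U = y"
    using F2_independent_sum_inj[OF char2 independent] by blast
qed

lemma coords_unique:
  assumes "U \<subseteq> {..<d}"
  shows "coords (sum B U) = U"
proof -
  have "sum B U \<in> V"
    using assms basis_in_V finite_subset[OF assms] by (intro sum_in_V) auto
  then have "coords (sum B U) \<subseteq> {..<d}" "sum B (coords (sum B U)) = sum B U"
    using coords by auto
  then show ?thesis
    using F2_independent_sum_inj[OF char2 independent _ _ assms] by simp
qed

lemma coords_zero: "coords 0 = {}"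
  using coords_unique[of "{}"] by simp

lemma coords_add:
  assumes "y \<in> V" "y' \<in> V"
  shows "coords (y + y') = sym_diff (coords y) (coords y')"
proof -
  have sub: "coords y \<subseteq> {..<d}" "coords y' \<subseteq> {..<d}"
    using coords assms by auto
  then have "sum B (sym_diff (coords y) (coords y')) = sum B (coords y) + sum B (coords y')"
    using sum_sym_diff[OF char2] finite_subset by blast
  also have "\<dots> = y + y'"
    using coords assms by simp
  finally have "coords (y + y') = coords (sum B (sym_diff (coords y) (coords y')))"
    by simp
  also have "\<dots> = sym_diff (coords y) (coords y')"
    using sub by (intro coords_unique) auto
  finally show ?thesis .
qed

lemma coords_eq_empty_iff: "y \<in> V \<Longrightarrow> coords y = {} \<longleftrightarrow> y = 0"
  using coords[of y] coords_zero by auto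

end

section \<open>The subfields \<open>GF(2\<^sup>m)\<close> of the algebraic closure of \<open>F\<^sub>2\<close>\<close>

lemma size_eq_card_set_mset: "(\<And>a. count M a \<le> 1) \<Longrightarrow> size M = card (set_mset M)"
proof (induction M)
  case empty
  then show ?case by simp
next
  case (add x M)
  have "x \<notin># M"
    using add.prems[of x] by (simp add: count_eq_zero_iff)
  moreover have "count M a \<le> 1" for a
    using add.prems[of a] by (simp split: if_splits)
  ultimately show ?case
    using add.IH by simp
qed

lemma size_proots_alg_closed:
  fixes p :: "'a::alg_closed_field poly"
  assumes "p \<noteq> 0"
  shows "size (proots p) = degree p"
proof -
  obtain A where A: "size A = degree p" "p = smult (lead_coeff p) (\<Prod>x\<in>#A. [:-x, 1:])"
    using alg_closed_imp_factorization[OF assms] by blast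
  have "proots p = proots (\<Prod>x\<in>#A. [:-x, 1:])"
    using assms by (subst A(2)) simp
  also have "(\<Prod>x\<in>#A. [:-x, 1:]) = (\<Prod>q\<in>#image_mset (\<lambda>x. [:-x, 1:]) A. q)"
    by simp
  also have "proots \<dots> = (\<Sum>q\<in>#image_mset (\<lambda>x. [:-x, 1:]) A. proots q)"
    by (rule proots_prod_mset) auto
  also have "\<dots> = A"
    by (induction A) auto
  finally show ?thesis
    using A(1) by simp
qed

lemma count_proots_le_1:
  fixes p :: "'a::idom poly"
  assumes "p \<noteq> 0" "poly (pderiv p) a \<noteq> 0"
  shows "count (proots p) a \<le> 1"
proof (rule ccontr)
  assume "\<not> count (proots p) a \<le> 1"
  then have "2 \<le> order a p"
    using assms(1) by simp
  then have "[:-a, 1:] ^ 2 dvd p"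
    using order_1[of a p] power_le_dvd by blast
  then obtain q where "p = [:-a, 1:] ^ 2 * q"
    by (elim dvdE)
  then have "poly (pderiv p) a = 0"
    by (simp add: pderiv_mult pderiv_power)
  with assms(2) show False
    by simp
qed

lemma CHAR_bit_alg_closure: "CHAR(bit alg_closure) = 2"
  by (simp add: CHAR_bit)

text \<open>For \<open>0 < m\<close> this is the field with \<open>2\<^sup>m\<close> elements; working inside one algebraic closure
  makes the inclusions \<open>GF r \<subseteq> GF m\<close> for \<open>r dvd m\<close> literal. Note that \<open>GF 0\<close> is the whole closure.\<close>
definition GF :: "nat \<Rightarrow> bit alg_closure set" where
  "GF m = {x. x ^ (2 ^ m) = x}"

lemma card_GF:
  assumes "0 < m"
  shows "finite (GF m)" "card (GF m) = 2 ^ m"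
proof -
  define N :: nat where "N = 2 ^ m"
  have "2 ^ 1 \<le> N"
    unfolding N_def using assms by (intro power_increasing) auto
  then have N2: "2 \<le> N"
    by simp
  define p :: "bit alg_closure poly" where "p = [:0, 1:] ^ N - [:0, 1:]"
  have degree_p: "degree p = N"
  proof -
    have "degree ([:0, 1:] ^ N :: bit alg_closure poly) = N"
      by (simp add: degree_power_eq)
    moreover have "degree ([:0, 1:] :: bit alg_closure poly) < N"
      using N2 by simp
    ultimately show ?thesis
      unfolding p_def diff_conv_add_uminus by (subst degree_add_eq_left) auto
  qed
  then have "p \<noteq> 0"
    using N2 by auto
  \<comment> \<open>\<open>p' = N X^(N-1) - 1 = -1\<close> since \<open>N\<close> is even, so \<open>p\<close> has no multiple roots.\<close>
  have "of_nat N = (0 :: bit alg_closure)"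
    by (subst of_nat_eq_0_iff_char_dvd) (use assms in \<open>simp add: CHAR_bit N_def\<close>)
  then have pderiv_p: "poly (pderiv p) x = -1" for x
    by (simp add: p_def pderiv_diff pderiv_power pderiv_pCons)
  have "count (proots p) a \<le> 1" for a
    using count_proots_le_1[OF \<open>p \<noteq> 0\<close>] pderiv_p by simp
  then have "card (set_mset (proots p)) = N"
    using size_eq_card_set_mset[of "proots p"] size_proots_alg_closed[OF \<open>p \<noteq> 0\<close>] degree_p
    by simp
  moreover have "set_mset (proots p) = GF m"
    using \<open>p \<noteq> 0\<close> by (auto simp: GF_def p_def N_def)
  ultimately show "finite (GF m)" "card (GF m) = 2 ^ m"
    using finite_set_mset[of "proots p"] by (simp_all add: N_def)
qed

lemma GF_add: "x \<in> GF m \<Longrightarrow> y \<in> GF m \<Longrightarrow> x + y \<in> GF m"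
  by (simp add: GF_def frobenius_add[OF CHAR_bit_alg_closure])

lemma GF_mult: "x \<in> GF m \<Longrightarrow> y \<in> GF m \<Longrightarrow> x * y \<in> GF m"
  by (simp add: GF_def power_mult_distrib)

lemma GF_0 [simp]: "0 \<in> GF m"
  by (simp add: GF_def)

lemma GF_power: "x \<in> GF m \<Longrightarrow> x ^ n \<in> GF m"
  by (induction n) (simp_all add: GF_def power_mult_distrib)

lemma GF_subset:
  assumes "r dvd m"
  shows "GF r \<subseteq> GF m"
proof
  fix x assume x: "x \<in> GF r"
  obtain j where m: "m = r * j"
    using assms by blast
  have "x ^ (2 ^ (r * j)) = x"
  proof (induction j)
    case 0
    then show ?case by simp
  next
    case (Suc j)
    have "x ^ (2 ^ (r * Suc j)) = (x ^ (2 ^ (r * j))) ^ (2 ^ r)"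
      by (simp add: power_mult[symmetric] power_add mult.commute)
    also have "\<dots> = x"
      using Suc x by (simp add: GF_def)
    finally show ?case .
  qed
  with m show "x \<in> GF m"
    by (simp add: GF_def)
qed

lemma ex_F2_basis_GF:
  assumes "0 < m"
  shows "\<exists>\<beta>. F2_basis (GF m) \<beta> m"
proof -
  obtain \<beta> where "\<forall>i<m. \<beta> i \<in> GF m" "F2_independent \<beta> {..<m}"
    using ex_F2_independent[OF CHAR_bit_alg_closure, of "GF m" m] card_GF[OF assms] by auto
  then have "F2_basis (GF m) \<beta> m"
    using card_GF[OF assms] by unfold_locales (auto simp: CHAR_bit GF_add)
  then show ?thesis
    by blast
qed

lemma ex_inj_into_GF:
  assumes "l \<le> (2::nat) ^ m"
  shows "\<exists>\<alpha>. (\<forall>g. \<alpha> g \<in> GF m) \<and> inj_on \<alpha> {..<l}"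
proof (cases "0 < m")
  case True
  then obtain f where f: "f ` {..<l} \<subseteq> GF m" "inj_on f {..<l}"
    using card_le_inj[of "{..<l}" "GF m"] card_GF[OF True] assms by auto
  define \<alpha> where "\<alpha> g = (if g < l then f g else 0)" for g
  have "inj_on \<alpha> {..<l}"
    using f(2) by (auto simp: inj_on_def \<alpha>_def)
  moreover have "\<alpha> g \<in> GF m" for g
    using f(1) by (auto simp: \<alpha>_def)
  ultimately show ?thesis
    by blast
next
  case False
  with assms have "l \<le> 1"
    by simp
  then have "inj_on (\<lambda>_. 0) {..<l}"
    by (auto simp: inj_on_def)
  then show ?thesis
    by (intro exI[of _ "\<lambda>_. 0"]) simp
qed

section \<open>Maximally recoverable codes from good labellings\<close>

lemma sum_lessThan_add:
  "(\<Sum>u<m + n. f u) = (\<Sum>u<m. f u) + (\<Sum>d<n. f (m + d) :: 'a::comm_monoid_add)" for m n :: nat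
  by (induction n) (auto simp: add.assoc)

definition coord_group :: "nat \<Rightarrow> nat \<Rightarrow> nat \<Rightarrow> nat \<Rightarrow> nat" where
  "coord_group k h r u = (if u < k + h then u div r else u - (k + h))"

definition label :: "nat \<Rightarrow> nat \<Rightarrow> (nat \<Rightarrow> 'a) \<Rightarrow> nat \<Rightarrow> 'a::zero" where
  "label k h \<mu> u = (if u < k + h then \<mu> u else 0)"

definition erasure_pattern :: "nat \<Rightarrow> nat \<Rightarrow> nat \<Rightarrow> (nat \<Rightarrow> nat) \<Rightarrow> bool" where
  "erasure_pattern k r h e \<longleftrightarrow>
     (\<forall>g < num_groups k r h. e g < code_length k r h \<and> coord_group k h r (e g) = g)"

text \<open>After erasing \<open>e g\<close> in every local group, a codeword \<open>c\<close> satisfies the checks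
  \<open>\<Sum>\<^sub>u c\<^sub>u (\<lambda>\<^sub>u + \<lambda>\<^bsub>e(G u)\<^esub>)\<^bsup>2^s\<^esup> = 0\<close> for \<open>s < h\<close>, where \<open>\<lambda>\<close> is the label. The
  independence required below makes them a nonsingular Moore system on any \<open>h\<close> coordinates.\<close>
definition good_labelling :: "nat \<Rightarrow> nat \<Rightarrow> nat \<Rightarrow> (nat \<Rightarrow> 'a::comm_monoid_add) \<Rightarrow> bool" where
  "good_labelling k r h \<mu> \<longleftrightarrow>
     (\<forall>e S. erasure_pattern k r h e \<longrightarrow> S \<subseteq> {..<code_length k r h} \<longrightarrow> card S \<le> h \<longrightarrow>
        (\<forall>u\<in>S. u \<noteq> e (coord_group k h r u)) \<longrightarrow>
        F2_independent (\<lambda>u. label k h \<mu> u + label k h \<mu> (e (coord_group k h r u))) S)"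

lemma div_eq_iff_bounds:
  assumes "0 < (r::nat)"
  shows "i div r = g \<longleftrightarrow> g * r \<le> i \<and> i < g * r + r"
proof
  assume "i div r = g"
  then show "g * r \<le> i \<and> i < g * r + r"
    using assms by (metis add.commute div_times_less_eq_dividend dividend_less_div_times mult.commute)
next
  assume "g * r \<le> i \<and> i < g * r + r"
  then show "i div r = g"
    using assms by (metis add.commute div_nat_eqI mult.commute mult_Suc_right)
qed

locale blocks =
  fixes k r h :: nat
  assumes r_pos: "0 < r" and r_dvd: "r dvd k + h"
begin

lemma num_groups_mult: "num_groups k r h * r = k + h"
  using r_dvd by (simp add: num_groups_def)

lemma div_less_num_groups: "i < k + h \<Longrightarrow> i div r < num_groups k r h"
  using num_groups_mult r_pos by (metis div_less_iff_less_mult)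

lemma coord_group_less: "u < code_length k r h \<Longrightarrow> coord_group k h r u < num_groups k r h"
  by (cases "u < k + h") (auto simp: coord_group_def code_length_def div_less_num_groups)

lemma local_group_eq:
  "g < num_groups k r h \<Longrightarrow>
    local_group k h (\<lambda>i. i div r) g = {u. u < code_length k r h \<and> coord_group k h r u = g}"
  by (auto simp: local_group_def group_members_def coord_group_def code_length_def)

lemma valid_partition_div: "valid_partition k r h (\<lambda>i. i div r)"
  unfolding valid_partition_def
proof (intro conjI allI impI)
  fix g assume "g < num_groups k r h"
  then have "g * r + r \<le> k + h"
    using num_groups_mult by (metis add.commute mult_Suc Suc_leI mult_le_mono1)
  then have "group_members k h (\<lambda>i. i div r) g = {g * r..<g * r + r}"
    using r_pos by (auto simp: group_members_def div_eq_iff_bounds)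
  then show "card (group_members k h (\<lambda>i. i div r) g) = r"
    by simp
qed (rule div_less_num_groups)

lemma ex_erasure_pattern:
  assumes "\<forall>g < num_groups k r h. card (E \<inter> local_group k h (\<lambda>i. i div r) g) = 1"
  shows "\<exists>e. erasure_pattern k r h e \<and>
    (\<forall>u < code_length k r h. u \<in> E \<longleftrightarrow> u = e (coord_group k h r u))"
proof -
  have "\<exists>v. E \<inter> {u. u < code_length k r h \<and> coord_group k h r u = g} = {v}"
    if "g < num_groups k r h" for g
    using assms that local_group_eq[OF that] by (metis card_1_singletonE)
  then obtain e where e: "\<And>g. g < num_groups k r h \<Longrightarrow>
      E \<inter> {u. u < code_length k r h \<and> coord_group k h r u = g} = {e g}"
    by metis
  then have "erasure_pattern k r h e"
    by (auto simp: erasure_pattern_def)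
  moreover have "u \<in> E \<longleftrightarrow> u = e (coord_group k h r u)" if "u < code_length k r h" for u
    using e[OF coord_group_less[OF that]] that by blast
  ultimately show ?thesis
    by blast
qed

end

lemma encode_diff:
  "encode k r h P grp (\<lambda>i. x i - y i) u = encode k r h P grp x u - encode k r h P grp y u"
proof -
  have "sym_val k P (\<lambda>i. x i - y i) j = sym_val k P x j - sym_val k P y j" for j
    by (simp add: sym_val_def sum_subtractf right_diff_distrib)
  then show ?thesis
    by (simp add: encode_def sum_subtractf)
qed

lemma card_messages_ge: "card (UNIV :: 'a set) ^ k \<le> card (messages k :: (nat \<Rightarrow> 'a::{field,finite}) set)"
proof -
  have "inj_on (\<lambda>f i. if i < k then f i else 0) (Pi\<^sub>E {..<k} (\<lambda>_. UNIV :: 'a set))"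
  proof (rule inj_onI)
    fix f g assume f: "f \<in> Pi\<^sub>E {..<k} (\<lambda>_. UNIV)" and g: "g \<in> Pi\<^sub>E {..<k} (\<lambda>_. UNIV)"
      and eq: "(\<lambda>i. if i < k then f i else 0) = (\<lambda>i. if i < k then g i else 0)"
    show "f = g"
    proof (rule PiE_ext[OF f g])
      fix i assume "i \<in> {..<k}"
      then show "f i = g i"
        using fun_cong[OF eq, of i] by simp
    qed
  qed
  moreover have "(\<lambda>f i. if i < k then f i else 0) ` (Pi\<^sub>E {..<k} (\<lambda>_. UNIV)) \<subseteq> messages k"
    by (rule image_subsetI) (simp add: messages_def)
  moreover have "finite (messages k :: (nat \<Rightarrow> 'a) set)"
    unfolding messages_def by (rule finite_funs_vanishing_from)
  ultimately have "card (Pi\<^sub>E {..<k} (\<lambda>_. UNIV :: 'a set)) \<le> card (messages k :: (nat \<Rightarrow> 'a) set)"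
    by (rule card_inj_on_le)
  then show ?thesis
    by (simp add: card_PiE)
qed

lemma ex_message_vanishing_on:
  fixes f :: "(nat \<Rightarrow> 'a::{field,finite}) \<Rightarrow> nat \<Rightarrow> 'a"
  assumes diff: "\<And>x y u. f (\<lambda>i. x i - y i) u = f x u - f y u"
    and "finite Z" "card Z < k"
  shows "\<exists>x\<in>messages k. x \<noteq> (\<lambda>_. 0) \<and> (\<forall>u\<in>Z. f x u = 0)"
proof -
  define q where "q = card (UNIV :: 'a set)"
  have "card {0::'a, 1} \<le> q"
    unfolding q_def by (intro card_mono) auto
  then have q2: "2 \<le> q"
    by simp
  \<comment> \<open>Pigeonhole: fewer than \<open>q ^ k\<close> restrictions to \<open>Z\<close>; the difference of two colliding
    messages vanishes on \<open>Z\<close>.\<close>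
  define \<Phi> where "\<Phi> x = restrict (f x) Z" for x
  have "\<Phi> ` messages k \<subseteq> Pi\<^sub>E Z (\<lambda>_. UNIV)"
    by (rule image_subsetI) (simp add: \<Phi>_def)
  then have "card (\<Phi> ` messages k) \<le> card (Pi\<^sub>E Z (\<lambda>_. UNIV :: 'a set))"
    by (intro card_mono finite_PiE) (simp_all add: assms(2))
  also have "\<dots> = q ^ card Z"
    by (simp add: card_PiE assms(2) q_def)
  also have "\<dots> < q ^ k"
    using q2 assms(3) by (intro power_strict_increasing) auto
  also have "\<dots> \<le> card (messages k :: (nat \<Rightarrow> 'a) set)"
    unfolding q_def by (rule card_messages_ge)
  finally have "\<not> inj_on \<Phi> (messages k)"
    by (metis card_image less_irrefl)
  then obtain x y where xy: "x \<in> messages k" "y \<in> messages k" "x \<noteq> y" "\<Phi> x = \<Phi> y"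
    unfolding inj_on_def by blast
  define d where "d i = x i - y i" for i
  have "d \<in> messages k"
    using xy(1,2) by (simp add: messages_def d_def)
  moreover have "d \<noteq> (\<lambda>_. 0)"
    using xy(3) by (auto simp: d_def fun_eq_iff)
  moreover have "f d u = 0" if "u \<in> Z" for u
    using fun_cong[OF xy(4), of u] that diff[of x y u] by (simp add: \<Phi>_def d_def[abs_def])
  ultimately show ?thesis
    by blast
qed

locale labelled_code = blocks +
  fixes \<mu> :: "nat \<Rightarrow> 'a::{field,finite}" and P :: "nat \<Rightarrow> nat \<Rightarrow> 'a"
  assumes char2: "CHAR('a) = 2"
    and heavy_coeffs: "\<And>i s. s < h \<Longrightarrow> (\<Sum>d<h. P d i * \<mu> (k + d) ^ (2 ^ s)) = \<mu> i ^ (2 ^ s)"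
begin

abbreviation codeword :: "(nat \<Rightarrow> 'a) \<Rightarrow> nat \<Rightarrow> 'a" where
  "codeword x \<equiv> encode k r h P (\<lambda>i. i div r) x"

lemma codeword_global_check:
  assumes "s < h"
  shows "(\<Sum>u<code_length k r h. codeword x u * label k h \<mu> u ^ (2 ^ s)) = 0"
proof -
  have "(\<Sum>u<code_length k r h. codeword x u * label k h \<mu> u ^ (2 ^ s)) =
      (\<Sum>u<k + h. codeword x u * label k h \<mu> u ^ (2 ^ s))"
    unfolding code_length_def sum_lessThan_add[of _ "k + h"] by (simp add: label_def power_0_left)
  also have "\<dots> = (\<Sum>u<k + h. sym_val k P x u * \<mu> u ^ (2 ^ s))"
    by (intro sum.cong) (auto simp: encode_def label_def)
  also have "\<dots> = (\<Sum>u<k. x u * \<mu> u ^ (2 ^ s)) + (\<Sum>d<h. (\<Sum>j<k. P d j * x j) * \<mu> (k + d) ^ (2 ^ s))"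
    by (simp add: sum_lessThan_add sym_val_def)
  also have "(\<Sum>d<h. (\<Sum>j<k. P d j * x j) * \<mu> (k + d) ^ (2 ^ s)) =
      (\<Sum>j<k. x j * (\<Sum>d<h. P d j * \<mu> (k + d) ^ (2 ^ s)))"
    by (simp add: sum_distrib_left sum_distrib_right ac_simps sum.swap[of _ "{..<h}"])
  also have "\<dots> = (\<Sum>j<k. x j * \<mu> j ^ (2 ^ s))"
    using heavy_coeffs assms by simp
  finally show ?thesis
    using char2_add_self[OF char2] by simp
qed

lemma codeword_local_check:
  assumes "g < num_groups k r h"
  shows "(\<Sum>u | u < code_length k r h \<and> coord_group k h r u = g. codeword x u) = 0"
proof -
  define M where "M = group_members k h (\<lambda>i. i div r) g"
  have "{u. u < code_length k r h \<and> coord_group k h r u = g} = insert (k + h + g) M"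
    using assms by (auto simp: M_def group_members_def code_length_def coord_group_def)
  moreover have "finite M" "k + h + g \<notin> M"
    by (auto simp: M_def group_members_def)
  moreover have "codeword x (k + h + g) = (\<Sum>j\<in>M. sym_val k P x j)"
    using assms by (simp add: encode_def code_length_def M_def)
  moreover have "(\<Sum>j\<in>M. codeword x j) = (\<Sum>j\<in>M. sym_val k P x j)"
    by (intro sum.cong) (auto simp: M_def group_members_def encode_def)
  ultimately show ?thesis
    using char2_add_self[OF char2] by simp
qed

lemma codeword_erasure_check:
  assumes "erasure_pattern k r h e" "s < h"
  shows "(\<Sum>u<code_length k r h. codeword x u *
      (label k h \<mu> u + label k h \<mu> (e (coord_group k h r u))) ^ (2 ^ s)) = 0"
proof -
  let ?G = "coord_group k h r" and ?lab = "label k h \<mu>"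
  have "(\<Sum>u<code_length k r h. codeword x u * ?lab (e (?G u)) ^ (2 ^ s)) =
      (\<Sum>g<num_groups k r h. \<Sum>u\<in>{u \<in> {..<code_length k r h}. ?G u = g}.
        codeword x u * ?lab (e (?G u)) ^ (2 ^ s))"
    by (rule sum.group[symmetric]) (auto intro: coord_group_less)
  also have "\<dots> = (\<Sum>g<num_groups k r h. ?lab (e g) ^ (2 ^ s) *
      (\<Sum>u | u < code_length k r h \<and> ?G u = g. codeword x u))"
    by (intro sum.cong refl) (auto simp: sum_distrib_left mult.commute intro!: sum.cong)
  also have "\<dots> = 0"
    using codeword_local_check by simp
  finally show ?thesis
    using codeword_global_check[OF assms(2)]
    by (simp add: frobenius_add[OF char2] distrib_left sum.distrib)
qed

definition off_pattern_support :: "(nat \<Rightarrow> nat) \<Rightarrow> (nat \<Rightarrow> 'a) \<Rightarrow> nat set" where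
  "off_pattern_support e x =
    {u. u < code_length k r h \<and> u \<noteq> e (coord_group k h r u) \<and> codeword x u \<noteq> 0}"

lemma codeword_eq_0_off_pattern:
  assumes good: "good_labelling k r h \<mu>" and e: "erasure_pattern k r h e"
    and light: "card (off_pattern_support e x) \<le> h"
    and "v < code_length k r h" "v \<noteq> e (coord_group k h r v)"
  shows "codeword x v = 0"
proof -
  let ?N = "code_length k r h" and ?G = "coord_group k h r"
  define W where "W = off_pattern_support e x"
  define \<delta> where "\<delta> u = label k h \<mu> u + label k h \<mu> (e (?G u))" for u
  have finW: "finite W"
    by (simp add: W_def off_pattern_support_def)
  have "\<forall>S. S \<subseteq> {..<?N} \<longrightarrow> card S \<le> h \<longrightarrow> (\<forall>u\<in>S. u \<noteq> e (?G u)) \<longrightarrow> F2_independent \<delta> S"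
    using good e unfolding good_labelling_def \<delta>_def by blast
  moreover have "W \<subseteq> {..<?N}" "\<forall>u\<in>W. u \<noteq> e (?G u)"
    by (auto simp: W_def off_pattern_support_def)
  ultimately have "F2_independent \<delta> W"
    using light[folded W_def] by blast
  moreover have "(\<Sum>u\<in>W. codeword x u * \<delta> u ^ (2 ^ s)) = 0" if "s < h" for s
  proof -
    have "(\<Sum>u\<in>W. codeword x u * \<delta> u ^ (2 ^ s)) = (\<Sum>u<?N. codeword x u * \<delta> u ^ (2 ^ s))"
      by (rule sum.mono_neutral_left)
        (auto simp: W_def off_pattern_support_def \<delta>_def char2_add_self[OF char2] power_0_left)
    then show ?thesis
      using codeword_erasure_check[OF e that] by (simp add: \<delta>_def)
  qed
  ultimately have "\<forall>u\<in>W. codeword x u = 0"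
    using moore_coeffs_zero[OF char2 finW light[folded W_def]] by blast
  with assms(4,5) show ?thesis
    by (auto simp: W_def off_pattern_support_def)
qed

lemma codeword_eq_0_if_light:
  assumes good: "good_labelling k r h \<mu>" and e: "erasure_pattern k r h e"
    and light: "card (off_pattern_support e x) \<le> h"
  shows "codeword x u = 0"
proof -
  let ?N = "code_length k r h" and ?G = "coord_group k h r"
  note off_pattern = codeword_eq_0_off_pattern[OF good e light]
  consider "u < ?N" "u = e (?G u)" | "u < ?N" "u \<noteq> e (?G u)" | "\<not> u < ?N"
    by blast
  then show ?thesis
  proof cases
    case 1
    \<comment> \<open>The erased coordinate is recovered from the local check of its group.\<close>
    define L where "L = {v. v < ?N \<and> ?G v = ?G u}"
    have "finite L" "u \<in> L"
      using 1 by (auto simp: L_def)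
    then have "(\<Sum>v\<in>L. codeword x v) = codeword x u + (\<Sum>v\<in>L - {u}. codeword x v)"
      by (rule sum.remove)
    also have "(\<Sum>v\<in>L - {u}. codeword x v) = 0"
      using 1 by (intro sum.neutral) (auto simp: L_def intro!: off_pattern)
    finally show ?thesis
      using codeword_local_check[OF coord_group_less, of u x] 1 by (simp add: L_def)
  next
    case 2
    then show ?thesis
      by (rule off_pattern)
  next
    case 3
    then show ?thesis
      by (simp add: encode_def code_length_def)
  qed
qed

lemma message_eq_0_if_light:
  assumes "good_labelling k r h \<mu>" "erasure_pattern k r h e"
    and "x \<in> messages k" "card (off_pattern_support e x) \<le> h"
  shows "x = (\<lambda>_. 0)"
proof
  fix i
  show "x i = 0"
  proof (cases "i < k")
    case True
    then have "x i = codeword x i"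
      by (simp add: encode_def sym_val_def)
    also have "\<dots> = 0"
      using assms(4) by (rule codeword_eq_0_if_light[OF assms(1,2)])
    finally show ?thesis .
  next
    case False
    then show ?thesis
      using assms(3) by (simp add: messages_def)
  qed
qed

lemma ex_light_message:
  assumes "0 < k" "erasure_pattern k r h e"
  shows "\<exists>x\<in>messages k. x \<noteq> (\<lambda>_. 0) \<and> card (off_pattern_support e x) \<le> h + 1"
proof -
  let ?N = "code_length k r h" and ?G = "coord_group k h r" and ?l = "num_groups k r h"
  define R where "R = {u. u < ?N \<and> u \<noteq> e (?G u)}"
  have R: "R \<subseteq> {..<?N}" "finite R"
    by (auto simp: R_def)
  \<comment> \<open>The erased coordinates \<open>e g\<close> are distinct, so at most \<open>k + h\<close> coordinates survive.\<close>
  have "inj_on e {..<?l}"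
  proof (rule inj_onI)
    fix g g' assume "g \<in> {..<?l}" "g' \<in> {..<?l}" "e g = e g'"
    then show "g = g'"
      using assms(2) unfolding erasure_pattern_def by (metis lessThan_iff)
  qed
  moreover have "e ` {..<?l} \<subseteq> {..<?N} - R"
    using assms(2) by (auto simp: R_def erasure_pattern_def)
  ultimately have "?l \<le> card ({..<?N} - R)"
    using card_inj_on_le[of e "{..<?l}" "{..<?N} - R"] by simp
  moreover have "card R \<le> ?N"
    using card_mono[OF finite_lessThan R(1)] by simp
  ultimately have card_R: "card R \<le> k + h"
    using R by (simp add: card_Diff_subset code_length_def)
  obtain Z where Z: "Z \<subseteq> R" "card Z = min (k - 1) (card R)"
    using obtain_subset_with_card_n[of "min (k - 1) (card R)" R] by auto
  have "finite Z" "card Z < k"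
    using Z R(2) assms(1) finite_subset by auto
  then obtain x where x: "x \<in> messages k" "x \<noteq> (\<lambda>_. 0)" "\<forall>u\<in>Z. codeword x u = 0"
    using ex_message_vanishing_on[of codeword, OF encode_diff] by blast
  then have "off_pattern_support e x \<subseteq> R - Z"
    by (auto simp: R_def off_pattern_support_def)
  then have "card (off_pattern_support e x) \<le> card (R - Z)"
    using R(2) by (intro card_mono) auto
  also have "\<dots> \<le> h + 1"
    using Z card_R R(2) by (simp add: card_Diff_subset finite_subset)
  finally show ?thesis
    using x by blast
qed

lemma punctured_MDS_if_erasure_pattern:
  assumes "0 < k" "good_labelling k r h \<mu>" "erasure_pattern k r h e"
    and in_E: "\<forall>u < code_length k r h. u \<in> E \<longleftrightarrow> u = e (coord_group k h r u)"
  shows "punctured_MDS k r h P (\<lambda>i. i div r) E"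
proof -
  let ?N = "code_length k r h"
  define wt where "wt x = card (off_pattern_support e x)" for x
  have weight: "punct_weight ?N E (codeword x) = wt x" for x
  proof -
    have "{i. i < ?N \<and> i \<notin> E \<and> codeword x i \<noteq> 0} = off_pattern_support e x"
      using in_E by (auto simp: off_pattern_support_def)
    then show ?thesis
      by (simp add: punct_weight_def wt_def)
  qed
  have zero: "x = (\<lambda>_. 0)" if "x \<in> messages k" "wt x \<le> h" for x
    using message_eq_0_if_light[OF assms(2,3) that(1)] that(2) by (simp add: wt_def)
  show ?thesis
    unfolding punctured_MDS_def weight
  proof (intro conjI ballI impI)
    fix x :: "nat \<Rightarrow> 'a"
    assume "x \<in> messages k" and "\<forall>i. i < ?N \<and> i \<notin> E \<longrightarrow> codeword x i = 0"
    moreover from this have "wt x = 0"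
      using in_E by (auto simp: wt_def off_pattern_support_def)
    ultimately show "x = (\<lambda>_. 0)"
      by (intro zero) simp_all
  next
    let ?A = "{wt x | x. x \<in> messages k \<and> x \<noteq> (\<lambda>_. 0)}"
    have lower: "h + 1 \<le> wt x" if "x \<in> messages k" "x \<noteq> (\<lambda>_. 0)" for x
      using that zero[of x] by linarith
    obtain x where x: "x \<in> messages k" "x \<noteq> (\<lambda>_. 0)" "wt x \<le> h + 1"
      using ex_light_message[OF assms(1,3)] by (auto simp: wt_def)
    have "wt x \<le> ?N" for x
      using card_mono[of "{..<?N}" "off_pattern_support e x"]
      by (simp add: wt_def off_pattern_support_def subset_iff)
    then have "?A \<subseteq> {..?N}"
      by auto
    then have "finite ?A"
      by (rule finite_subset) simp
    moreover have "h + 1 \<in> ?A"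
      using lower[OF x(1,2)] x by (intro CollectI exI[of _ x]) simp
    moreover have "h + 1 \<le> a" if "a \<in> ?A" for a
      using that lower by blast
    ultimately show "Min ?A = h + 1"
      by (intro Min_eqI) auto
  qed
qed

lemma max_recoverable:
  assumes "0 < k" "good_labelling k r h \<mu>"
  shows "max_recoverable_local_code k r h P (\<lambda>i. i div r)"
  unfolding max_recoverable_local_code_def
proof (intro conjI allI impI)
  show "valid_partition k r h (\<lambda>i. i div r)"
    by (rule valid_partition_div)
  fix E assume "E \<subseteq> {..<code_length k r h} \<and>
    (\<forall>g<num_groups k r h. card (E \<inter> local_group k h (\<lambda>i. i div r) g) = 1)"
  then obtain e where "erasure_pattern k r h e"
    and "\<forall>u<code_length k r h. u \<in> E \<longleftrightarrow> u = e (coord_group k h r u)"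
    using ex_erasure_pattern[of E] by auto
  then show "punctured_MDS k r h P (\<lambda>i. i div r) E"
    by (rule punctured_MDS_if_erasure_pattern[OF assms])
qed

end

lemma ex_max_recoverable_if_good_labelling:
  fixes \<mu> :: "nat \<Rightarrow> 'a::{field,finite}"
  assumes char2: "CHAR('a) = 2" and "0 < k" "0 < r" "r dvd k + h"
    and good: "good_labelling k r h \<mu>"
  shows "\<exists>P :: nat \<Rightarrow> nat \<Rightarrow> 'a. max_recoverable_local_code k r h P (\<lambda>i. i div r)"
proof -
  interpret blocks k r h
    using assms(3,4) by unfold_locales
  \<comment> \<open>Erasing all local parities shows that the heavy labels are independent.\<close>
  define e where "e g = k + h + g" for g
  define S where "S = (\<lambda>d. k + d) ` {..<h}"
  have "erasure_pattern k r h e"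
    by (simp add: erasure_pattern_def e_def code_length_def coord_group_def)
  moreover have "S \<subseteq> {..<code_length k r h}" "card S \<le> h" "\<forall>u\<in>S. u \<noteq> e (coord_group k h r u)"
    by (auto simp: S_def e_def code_length_def card_image)
  ultimately have "F2_independent (\<lambda>u. label k h \<mu> u + label k h \<mu> (e (coord_group k h r u))) S"
    using good unfolding good_labelling_def by blast
  then have "F2_independent \<mu> S"
    by (rule F2_independent_cong) (auto simp: S_def e_def label_def coord_group_def)
  then have "F2_independent (\<lambda>d. \<mu> (k + d)) {..<h}"
    unfolding S_def by (rule F2_independent_reindex[rotated]) (simp add: inj_on_def)
  then have "\<exists>y. \<forall>s<h. (\<Sum>d<h. y d * \<mu> (k + d) ^ (2 ^ s)) = \<mu> i ^ (2 ^ s)" for i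
    by (rule moore_system_solvable[OF char2])
  then obtain Y where "\<And>i s. s < h \<Longrightarrow> (\<Sum>d<h. Y i d * \<mu> (k + d) ^ (2 ^ s)) = \<mu> i ^ (2 ^ s)"
    by metis
  then interpret labelled_code k r h \<mu> "\<lambda>d i. Y i d"
    using char2 by unfold_locales
  show ?thesis
    by (rule exI[of _ "\<lambda>d i. Y i d"], rule max_recoverable[OF assms(2) good])
qed

section \<open>Construction of a good labelling\<close>

locale labelling_construction = blocks +
  fixes m w :: nat and \<beta> \<kappa> \<alpha> :: "nat \<Rightarrow> bit alg_closure"
    and b :: "nat \<Rightarrow> 'a::field" and exps :: "nat \<Rightarrow> nat"
  assumes char2: "CHAR('a) = 2"
    and r_dvd_m: "r dvd m" and num_groups_le: "num_groups k r h \<le> 2 ^ m"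
    and \<beta>_basis: "F2_basis (GF r) \<beta> r"
    and \<kappa>_basis: "0 < m \<Longrightarrow> F2_basis (GF m) \<kappa> m"
    and \<alpha>_GF: "\<And>g. \<alpha> g \<in> GF m" and \<alpha>_inj: "inj_on \<alpha> {..<num_groups k r h}"
    and b_independent: "F2_independent b {..<r + m * w}"
    and exps: "{e. 0 < e \<and> e < h \<and> \<not> 2 ^ r dvd e} \<subseteq> exps ` {..<w}"
begin

text \<open>An \<open>F\<^sub>2\<close>-linear injection of \<open>GF(2\<^sup>r) \<times> GF(2\<^sup>m)\<^sup>w\<close> into the code field: the
  coordinates of the arguments w.r.t. \<open>\<beta>\<close> and \<open>\<kappa>\<close> select a subset of the \<open>r + m w\<close>
  independent elements \<open>b\<close>.\<close>
definition bits :: "bit alg_closure \<Rightarrow> (nat \<Rightarrow> bit alg_closure) \<Rightarrow> nat \<Rightarrow> bool" where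
  "bits y0 y i =
    (if i < r then i \<in> F2_basis.coords \<beta> r y0
     else (i - r) mod m \<in> F2_basis.coords \<kappa> m (y ((i - r) div m)))"

definition embed_tuple :: "bit alg_closure \<Rightarrow> (nat \<Rightarrow> bit alg_closure) \<Rightarrow> 'a" where
  "embed_tuple y0 y = (\<Sum>i<r + m * w. if bits y0 y i then b i else 0)"

definition in_domain :: "bit alg_closure \<Rightarrow> (nat \<Rightarrow> bit alg_closure) \<Rightarrow> bool" where
  "in_domain y0 y \<longleftrightarrow> y0 \<in> GF r \<and> (\<forall>j<w. y j \<in> GF m)"

lemma in_domain_add: "in_domain y0 y \<Longrightarrow> in_domain z0 z \<Longrightarrow> in_domain (y0 + z0) (\<lambda>j. y j + z j)"
  by (simp add: in_domain_def GF_add)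

lemma in_domain_sum:
  "finite S \<Longrightarrow> (\<And>u. u \<in> S \<Longrightarrow> in_domain (a u) (y u)) \<Longrightarrow>
    in_domain (\<Sum>u\<in>S. a u) (\<lambda>j. \<Sum>u\<in>S. y u j)"
proof (induction S rule: finite_induct)
  case empty
  then show ?case by (simp add: in_domain_def)
next
  case (insert x F)
  then have "in_domain (a x + (\<Sum>u\<in>F. a u)) (\<lambda>j. y x j + (\<Sum>u\<in>F. y u j))"
    by (intro in_domain_add) auto
  with insert(1,2) show ?case
    by simp
qed

lemma column_index:
  assumes "r \<le> i" "i < r + m * w"
  shows "0 < m" "(i - r) div m < w"
proof -
  have "i - r < w * m"
    using assms by (simp add: mult.commute)
  then show "0 < m"
    by (cases m) auto
  show "(i - r) div m < w"
    using \<open>i - r < w * m\<close> by (simp add: less_mult_imp_div_less)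
qed

lemma bits_add:
  assumes "in_domain y0 y" "in_domain z0 z" "i < r + m * w"
  shows "bits (y0 + z0) (\<lambda>j. y j + z j) i \<longleftrightarrow> bits y0 y i \<noteq> bits z0 z i"
proof (cases "i < r")
  case True
  then show ?thesis
    using assms F2_basis.coords_add[OF \<beta>_basis, of y0 z0] by (auto simp: bits_def in_domain_def)
next
  case False
  with assms(3) have "0 < m" "(i - r) div m < w"
    using column_index[of i] by auto
  then show ?thesis
    using False assms F2_basis.coords_add[OF \<kappa>_basis] by (auto simp: bits_def in_domain_def)
qed

lemma embed_tuple_add:
  assumes "in_domain y0 y" "in_domain z0 z"
  shows "embed_tuple (y0 + z0) (\<lambda>j. y j + z j) = embed_tuple y0 y + embed_tuple z0 z"
  unfolding embed_tuple_def sum.distrib[symmetric]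
  by (intro sum.cong refl) (use bits_add[OF assms] char2_add_self[OF char2] in auto)

lemma embed_tuple_zero: "embed_tuple 0 (\<lambda>_. 0) = 0"
proof -
  have "\<not> bits 0 (\<lambda>_. 0) i" if "i < r + m * w" for i
  proof (cases "i < r")
    case True
    then show ?thesis
      using F2_basis.coords_zero[OF \<beta>_basis] by (simp add: bits_def)
  next
    case False
    with that have "0 < m"
      using column_index[of i] by simp
    with False show ?thesis
      using F2_basis.coords_zero[OF \<kappa>_basis] by (simp add: bits_def)
  qed
  then show ?thesis
    by (simp add: embed_tuple_def)
qed

lemma embed_tuple_sum:
  "finite S \<Longrightarrow> (\<And>u. u \<in> S \<Longrightarrow> in_domain (a u) (y u)) \<Longrightarrow>
    embed_tuple (\<Sum>u\<in>S. a u) (\<lambda>j. \<Sum>u\<in>S. y u j) = (\<Sum>u\<in>S. embed_tuple (a u) (y u))"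
proof (induction S rule: finite_induct)
  case empty
  then show ?case by (simp add: embed_tuple_zero)
next
  case (insert x F)
  then have "embed_tuple (a x + (\<Sum>u\<in>F. a u)) (\<lambda>j. y x j + (\<Sum>u\<in>F. y u j)) =
      embed_tuple (a x) (y x) + embed_tuple (\<Sum>u\<in>F. a u) (\<lambda>j. \<Sum>u\<in>F. y u j)"
    by (intro embed_tuple_add in_domain_sum) auto
  with insert show ?case
    by simp
qed

lemma embed_tuple_eq_0:
  assumes "in_domain y0 y" "embed_tuple y0 y = 0"
  shows "y0 = 0" "0 < m \<Longrightarrow> j < w \<Longrightarrow> y j = 0"
proof -
  define I where "I = {i \<in> {..<r + m * w}. bits y0 y i}"
  have "sum b I = embed_tuple y0 y"
    unfolding embed_tuple_def I_def by (rule sum.inter_filter) simp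
  moreover have "I \<subseteq> {..<r + m * w}"
    by (auto simp: I_def)
  ultimately have "I = {}"
    using F2_independentD[OF b_independent, of I] assms(2) by simp
  then have no_bits: "\<not> bits y0 y i" if "i < r + m * w" for i
    using that by (auto simp: I_def)
  have y0: "y0 \<in> GF r"
    using assms(1) by (simp add: in_domain_def)
  have "i \<notin> F2_basis.coords \<beta> r y0" if "i < r" for i
    using no_bits[of i] that by (simp add: bits_def)
  with F2_basis.coords[OF \<beta>_basis y0] have "F2_basis.coords \<beta> r y0 = {}"
    by blast
  then show "y0 = 0"
    using F2_basis.coords_eq_empty_iff[OF \<beta>_basis y0] by simp
  assume m: "0 < m" and j: "j < w"
  have y_j: "y j \<in> GF m"
    using assms(1) j by (simp add: in_domain_def)
  have "F2_basis.coords \<kappa> m (y j) = {}"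
  proof (rule ccontr)
    assume "F2_basis.coords \<kappa> m (y j) \<noteq> {}"
    then obtain i' where i': "i' \<in> F2_basis.coords \<kappa> m (y j)"
      by blast
    then have "i' < m"
      using F2_basis.coords[OF \<kappa>_basis[OF m] y_j] by auto
    define i where "i = r + (j * m + i')"
    have "j * m + i' < Suc j * m"
      using \<open>i' < m\<close> by simp
    also have "\<dots> \<le> w * m"
      using j by (intro mult_le_mono1) simp
    finally have "i < r + m * w"
      by (simp add: i_def mult.commute)
    moreover have "bits y0 y i"
      using i' \<open>i' < m\<close> by (simp add: bits_def i_def)
    ultimately show False
      using no_bits by blast
  qed
  then show "y j = 0"
    using F2_basis.coords_eq_empty_iff[OF \<kappa>_basis[OF m] y_j] by simp
qed

definition base_label :: "nat \<Rightarrow> bit alg_closure" where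
  "base_label u = (if u < k + h then \<beta> (u mod r) else 0)"

definition labelling :: "nat \<Rightarrow> 'a" where
  "labelling u = embed_tuple (base_label u) (\<lambda>j. base_label u * \<alpha> (coord_group k h r u) ^ exps j)"

lemma base_label_GF: "base_label u \<in> GF r"
  using F2_basis.basis_in_V[OF \<beta>_basis] r_pos by (simp add: base_label_def)

lemma in_domain_base_label: "in_domain (base_label u) (\<lambda>j. base_label u * \<alpha> g ^ exps j)"
  using base_label_GF GF_subset[OF r_dvd_m] \<alpha>_GF
  by (auto simp: in_domain_def intro!: GF_mult GF_power)

lemma label_labelling [simp]: "label k h labelling = labelling"
  by (auto simp: fun_eq_iff label_def labelling_def base_label_def embed_tuple_zero)

lemma base_label_independent:
  assumes "g < num_groups k r h"
  shows "F2_independent base_label (group_members k h (\<lambda>i. i div r) g)"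
proof -
  define M where "M = group_members k h (\<lambda>i. i div r) g"
  have "inj_on (\<lambda>u. u mod r) M"
  proof (rule inj_onI)
    fix u v assume "u \<in> M" "v \<in> M" "u mod r = v mod r"
    moreover from this have "u div r = v div r"
      by (simp add: M_def group_members_def)
    ultimately show "u = v"
      by (metis div_mult_mod_eq)
  qed
  moreover have "(\<lambda>u. u mod r) ` M \<subseteq> {..<r}"
    using r_pos by auto
  then have "F2_independent \<beta> ((\<lambda>u. u mod r) ` M)"
    using F2_basis.independent[OF \<beta>_basis] by (rule F2_independent_subset[rotated])
  ultimately have "F2_independent (\<lambda>u. \<beta> (u mod r)) M"
    by (rule F2_independent_reindex)
  then show ?thesis
    unfolding M_def by (rule F2_independent_cong) (simp add: group_members_def base_label_def)
qed

lemma group_shift_sum_nonzero: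
  assumes "erasure_pattern k r h e" "U \<subseteq> {..<code_length k r h}"
    and "\<forall>u\<in>U. u \<noteq> e (coord_group k h r u)" "u0 \<in> U"
  shows "(\<Sum>u | u \<in> U \<and> coord_group k h r u = coord_group k h r u0.
      base_label u + base_label (e (coord_group k h r u0))) \<noteq> 0"
proof -
  let ?G = "coord_group k h r"
  define g where "g = ?G u0"
  define A where "A = {u. u < code_length k r h \<and> ?G u = g}"
  have g: "g < num_groups k r h"
    using assms(2,4) coord_group_less by (auto simp: g_def)
  have "A = insert (k + h + g) (group_members k h (\<lambda>i. i div r) g)"
    using local_group_eq[OF g] by (simp add: A_def local_group_def)
  moreover have "k + h + g \<notin> group_members k h (\<lambda>i. i div r) g"
    by (simp add: group_members_def)
  ultimately have "A - {k + h + g} = group_members k h (\<lambda>i. i div r) g"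
    by simp
  then have indep: "F2_independent base_label (A - {k + h + g})"
    using base_label_independent[OF g] by simp
  have zero: "base_label (k + h + g) = 0"
    by (simp add: base_label_def)
  have "finite A"
    by (simp add: A_def)
  moreover have "{u. u \<in> U \<and> ?G u = g} \<subseteq> A" "{u. u \<in> U \<and> ?G u = g} \<noteq> {}"
    using assms(2,4) by (auto simp: A_def g_def)
  moreover have "e g \<in> A" "e g \<notin> {u. u \<in> U \<and> ?G u = g}"
    using assms(1,3) g by (auto simp: A_def erasure_pattern_def)
  ultimately show ?thesis
    unfolding g_def[symmetric] by (rule sum_shift_nonzero[OF CHAR_bit_alg_closure indep zero])
qed

lemma sum_powers_eq_0:
  assumes "\<forall>g\<in>Gs. \<gamma> g \<in> GF r" "\<forall>j<w. (\<Sum>g\<in>Gs. \<gamma> g * \<alpha> g ^ exps j) = 0"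
    and "0 < ex" "ex < h"
  shows "(\<Sum>g\<in>Gs. \<gamma> g * \<alpha> g ^ ex) = 0"
proof -
  \<comment> \<open>Write \<open>ex = e' 2^(r a)\<close> with \<open>2^r\<close> not dividing \<open>e'\<close>; the coefficients lie in \<open>GF r\<close>, so
    the \<open>2^(r a)\<close>-th power map carries the relation for \<open>e'\<close> to the one for \<open>ex\<close>.\<close>
  have "ex \<noteq> 0" "\<not> is_unit ((2::nat) ^ r)"
    using assms(3) r_pos by simp_all
  then obtain e' where e': "ex = (2 ^ r) ^ multiplicity (2 ^ r) ex * e'" "\<not> 2 ^ r dvd e'"
    by (rule multiplicity_decompose')
  define a where "a = multiplicity (2 ^ r) ex"
  have ex: "ex = e' * 2 ^ (r * a)"
    using e'(1) by (simp add: a_def power_mult mult.commute)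
  have "0 < e'"
    using assms(3) unfolding ex by simp
  have "e' * 1 \<le> e' * 2 ^ (r * a)"
    by (intro mult_le_mono2) simp
  then have "e' < h"
    using assms(4) ex by linarith
  with \<open>0 < e'\<close> e'(2) have "e' \<in> exps ` {..<w}"
    using exps by blast
  then obtain j where "j < w" "e' = exps j"
    by blast
  then have "(\<Sum>g\<in>Gs. \<gamma> g * \<alpha> g ^ e') = 0"
    using assms(2) by simp
  moreover have "GF r \<subseteq> GF (r * a)"
    by (rule GF_subset) simp
  then have "\<forall>g\<in>Gs. \<gamma> g \<in> GF (r * a)"
    using assms(1) by blast
  then have "\<forall>g\<in>Gs. \<gamma> g ^ (2 ^ (r * a)) = \<gamma> g"
    by (simp add: GF_def)
  ultimately show ?thesis
    unfolding ex by (intro sum_frobenius_power_eq_0[OF CHAR_bit_alg_closure])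
qed

lemma group_power_sums_eq_0:
  assumes "Gs \<subseteq> {..<num_groups k r h}" "card Gs \<le> h" "\<forall>g\<in>Gs. \<gamma> g \<in> GF r"
    and "(\<Sum>g\<in>Gs. \<gamma> g) = 0" "0 < m \<Longrightarrow> \<forall>j<w. (\<Sum>g\<in>Gs. \<gamma> g * \<alpha> g ^ exps j) = 0"
    and "ex < card Gs"
  shows "(\<Sum>g\<in>Gs. \<gamma> g * \<alpha> g ^ ex) = 0"
proof (cases "ex = 0")
  case True
  then show ?thesis
    using assms(4) by simp
next
  case False
  \<comment> \<open>Two distinct groups need two distinct \<open>\<alpha>\<close>s, so \<open>GF m\<close> is not trivial.\<close>
  have "2 \<le> card Gs"
    using assms(6) False by simp
  also have "card Gs \<le> num_groups k r h"
    using assms(1) card_mono[of "{..<num_groups k r h}" Gs] by simp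
  also have "\<dots> \<le> 2 ^ m"
    by (rule num_groups_le)
  finally have "0 < m"
    by (cases m) auto
  then show ?thesis
    by (rule sum_powers_eq_0[OF assms(3) assms(5)]) (use assms(2,6) False in simp_all)
qed

lemma group_sums_eq_0:
  assumes U: "finite U" "U \<subseteq> {..<code_length k r h}" "card U \<le> h"
    and c: "\<forall>u\<in>U. c u \<in> GF r" "(\<Sum>u\<in>U. c u) = 0"
      "0 < m \<Longrightarrow> \<forall>j<w. (\<Sum>u\<in>U. c u * \<alpha> (coord_group k h r u) ^ exps j) = 0"
  shows "(\<Sum>u | u \<in> U \<and> coord_group k h r u = g. c u) = 0"
proof -
  let ?G = "coord_group k h r"
  define Gs where "Gs = ?G ` U"
  define \<gamma> where "\<gamma> g = (\<Sum>u | u \<in> U \<and> ?G u = g. c u)" for g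
  have regroup: "(\<Sum>u\<in>U. c u * \<alpha> (?G u) ^ ex) = (\<Sum>g\<in>Gs. \<gamma> g * \<alpha> g ^ ex)" for ex
  proof -
    have "(\<Sum>u\<in>U. c u * \<alpha> (?G u) ^ ex) = (\<Sum>g\<in>Gs. \<Sum>u | u \<in> U \<and> ?G u = g. c u * \<alpha> (?G u) ^ ex)"
      unfolding Gs_def by (rule sum.image_gen[OF U(1)])
    also have "\<dots> = (\<Sum>g\<in>Gs. \<gamma> g * \<alpha> g ^ ex)"
      unfolding \<gamma>_def by (intro sum.cong refl) (auto simp: sum_distrib_right intro!: sum.cong)
    finally show ?thesis .
  qed
  have Gs: "finite Gs" "Gs \<subseteq> {..<num_groups k r h}" "card Gs \<le> card U"
    using U coord_group_less by (auto simp: Gs_def card_image_le)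
  have "\<forall>g\<in>Gs. \<gamma> g \<in> GF r"
    unfolding \<gamma>_def using U(1) c(1) by (intro ballI F2_basis.sum_in_V[OF \<beta>_basis]) auto
  moreover have "(\<Sum>g\<in>Gs. \<gamma> g) = 0"
    using regroup[of 0] c(2) by simp
  moreover have "0 < m \<Longrightarrow> \<forall>j<w. (\<Sum>g\<in>Gs. \<gamma> g * \<alpha> g ^ exps j) = 0"
    using c(3) regroup by simp
  moreover have "card Gs \<le> h"
    using Gs(3) U(3) by simp
  ultimately have "\<forall>ex<card Gs. (\<Sum>g\<in>Gs. \<gamma> g * \<alpha> g ^ ex) = 0"
    using group_power_sums_eq_0[OF Gs(2)] by blast
  moreover have "inj_on \<alpha> Gs"
    using \<alpha>_inj Gs(2) by (rule inj_on_subset)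
  ultimately have "\<forall>g\<in>Gs. \<gamma> g = 0"
    using vandermonde_coeffs_zero[OF Gs(1) _ le_refl] by blast
  moreover have "\<gamma> g = 0" if "g \<notin> Gs"
    using that by (auto simp: \<gamma>_def Gs_def intro!: sum.neutral)
  ultimately show ?thesis
    unfolding \<gamma>_def[symmetric] by blast
qed

lemma good_labelling: "good_labelling k r h labelling"
  unfolding good_labelling_def label_labelling
proof (intro allI impI)
  fix e S
  let ?G = "coord_group k h r"
  assume e: "erasure_pattern k r h e" and S: "S \<subseteq> {..<code_length k r h}" "card S \<le> h"
    and avoid: "\<forall>u\<in>S. u \<noteq> e (?G u)"
  define c where "c u = base_label u + base_label (e (?G u))" for u
  have dom: "in_domain (c u) (\<lambda>j. c u * \<alpha> (?G u) ^ exps j)" for u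
    using in_domain_add[OF in_domain_base_label in_domain_base_label]
    by (simp add: c_def distrib_right)
  have shifted: "labelling u + labelling (e (?G u)) = embed_tuple (c u) (\<lambda>j. c u * \<alpha> (?G u) ^ exps j)"
    if "u \<in> S" for u
  proof -
    have "?G (e (?G u)) = ?G u"
      using e S(1) that coord_group_less by (auto simp: erasure_pattern_def)
    then show ?thesis
      unfolding labelling_def
      by (simp add: embed_tuple_add[OF in_domain_base_label in_domain_base_label] c_def distrib_right)
  qed
  show "F2_independent (\<lambda>u. labelling u + labelling (e (?G u))) S"
    unfolding F2_independent_def
  proof (intro allI impI notI)
    fix U assume U: "U \<subseteq> S" "U \<noteq> {}"
      and sum0: "(\<Sum>u\<in>U. labelling u + labelling (e (?G u))) = 0"
    have U_N: "U \<subseteq> {..<code_length k r h}"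
      using U(1) S(1) by blast
    then have finU: "finite U"
      by (rule finite_subset) simp
    have "card U \<le> card S"
      using U(1) S(1) by (intro card_mono) (auto intro: finite_subset)
    with S(2) have card_U: "card U \<le> h"
      by simp
    have "embed_tuple (\<Sum>u\<in>U. c u) (\<lambda>j. \<Sum>u\<in>U. c u * \<alpha> (?G u) ^ exps j) = 0"
      using sum0 shifted U(1) embed_tuple_sum[OF finU dom] by (simp add: subset_iff)
    moreover have "in_domain (\<Sum>u\<in>U. c u) (\<lambda>j. \<Sum>u\<in>U. c u * \<alpha> (?G u) ^ exps j)"
      by (rule in_domain_sum[OF finU dom])
    ultimately have "(\<Sum>u\<in>U. c u) = 0" "0 < m \<Longrightarrow> \<forall>j<w. (\<Sum>u\<in>U. c u * \<alpha> (?G u) ^ exps j) = 0"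
      using embed_tuple_eq_0 by blast+
    moreover have "\<forall>u\<in>U. c u \<in> GF r"
      using base_label_GF by (simp add: c_def GF_add)
    ultimately have "(\<Sum>u | u \<in> U \<and> ?G u = g. c u) = 0" for g
      using group_sums_eq_0[OF finU U_N card_U] by simp
    moreover obtain u0 where "u0 \<in> U"
      using U(2) by blast
    ultimately show False
      using group_shift_sum_nonzero[OF e U_N _ \<open>u0 \<in> U\<close>] avoid U(1) by (auto simp: c_def)
  qed
qed

end
section \<open>The parameters\<close>

lemma m_param:
  assumes "0 < r"
  shows "r dvd m_param k r h" "num_groups k r h \<le> 2 ^ m_param k r h"
proof -
  define l where "l = num_groups k r h"
  have "l < 2 ^ l"
    by (rule less_exp)
  also have "\<dots> \<le> 2 ^ (r * l)"
    using assms by (intro power_increasing) auto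
  finally have "\<exists>m. r dvd m \<and> l \<le> 2 ^ m"
    by (intro exI[of _ "r * l"]) simp
  then have "r dvd m_param k r h \<and> l \<le> 2 ^ m_param k r h"
    unfolding m_param_def l_def[symmetric] by (rule LeastI_ex)
  then show "r dvd m_param k r h" "num_groups k r h \<le> 2 ^ m_param k r h"
    by (simp_all add: l_def)
qed

lemma card_multiples_ge:
  assumes "0 < (q::nat)"
  shows "(h - 1) div q \<le> card {e. 0 < e \<and> e < h \<and> q dvd e}"
proof -
  define d where "d = (h - 1) div q"
  have "(\<lambda>j. q * j) ` {1..d} \<subseteq> {e. 0 < e \<and> e < h \<and> q dvd e}"
  proof
    fix x assume "x \<in> (\<lambda>j. q * j) ` {1..d}"
    then obtain j where j: "1 \<le> j" "j \<le> d" "x = q * j"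
      by auto
    have "q * j \<le> q * d"
      using j by simp
    also have "q * d \<le> h - 1"
      by (simp add: d_def)
    finally have "q * j \<le> h - 1" .
    moreover have "0 < q * j"
      using j assms by simp
    ultimately have "0 < q * j \<and> q * j < h"
      by linarith
    then show "x \<in> {e. 0 < e \<and> e < h \<and> q dvd e}"
      using j(3) by simp
  qed
  then have "card ((\<lambda>j. q * j) ` {1..d}) \<le> card {e. 0 < e \<and> e < h \<and> q dvd e}"
    by (rule card_mono[rotated]) simp
  moreover have "inj_on (\<lambda>j. q * j) {1..d}"
    by (rule inj_onI) (use assms in simp)
  then have "card ((\<lambda>j. q * j) ` {1..d}) = d"
    by (simp add: card_image)
  ultimately show ?thesis
    by (simp add: d_def)
qed

lemma card_exponents_le:
  assumes "0 < r" "0 < h"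
  shows "card {e. 0 < e \<and> e < h \<and> \<not> 2 ^ r dvd e} \<le> nat \<lceil>(real h - 1) * (1 - 1 / 2 ^ r)\<rceil>"
proof -
  define q :: nat where "q = 2 ^ r"
  define n where "n = h - 1"
  define d where "d = n div q"
  have "2 ^ 1 \<le> q"
    unfolding q_def using assms(1) by (intro power_increasing) auto
  then have q2: "2 \<le> q"
    by simp
  define Good where "Good = {e. 0 < e \<and> e < h \<and> \<not> q dvd e}"
  define Mult where "Mult = {e. 0 < e \<and> e < h \<and> q dvd e}"
  have "Good \<union> Mult = {0<..<h}" "Good \<inter> Mult = {}" "finite Good" "finite Mult"
    by (auto simp: Good_def Mult_def)
  then have "card Good + card Mult = n"
    using card_Un_disjoint[of Good Mult] by (simp add: n_def)
  moreover have "d \<le> card Mult"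
    using card_multiples_ge[of q h] q2 by (simp add: d_def n_def Mult_def)
  ultimately have card_Good: "card Good \<le> n - d"
    by simp
  have "n = q * d + n mod q" "n mod q < q"
    using q2 by (simp_all add: d_def)
  then have "real n < real q * (real d + 1)"
    by (metis add.commute add_less_cancel_left mult_Suc_right of_nat_Suc of_nat_less_iff of_nat_mult)
  then have "real n / real q < real d + 1"
    using q2 by (simp add: divide_less_eq mult.commute)
  then have "real n - real d - 1 < real n * (1 - 1 / real q)"
    by (simp add: algebra_simps)
  moreover have "real h - 1 = real n" "d \<le> n"
    using assms(2) by (simp_all add: n_def d_def of_nat_diff)
  ultimately have "real_of_int (int (n - d)) - 1 < (real h - 1) * (1 - 1 / 2 ^ r)"
    by (simp add: of_nat_diff q_def)
  then have "n - d \<le> nat \<lceil>(real h - 1) * (1 - 1 / 2 ^ r)\<rceil>"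
    by linarith
  with card_Good show ?thesis
    by (simp add: Good_def q_def)
qed

lemma ex_good_labelling:
  assumes char2: "CHAR('a::field) = 2" and "finite (UNIV :: 'a set)" and "0 < r" "r dvd k + h"
    and "2 ^ (r + m_param k r h * card {e. 0 < e \<and> e < h \<and> \<not> 2 ^ r dvd e}) \<le> card (UNIV :: 'a set)"
  shows "\<exists>\<mu> :: nat \<Rightarrow> 'a. good_labelling k r h \<mu>"
proof -
  define m where "m = m_param k r h"
  define E where "E = {e. 0 < e \<and> e < h \<and> \<not> 2 ^ r dvd e}"
  obtain exps where "bij_betw exps {..<card E} E"
    using ex_bij_betw_nat_finite[of E] by (auto simp: E_def atLeast0LessThan)
  then have exps: "E \<subseteq> exps ` {..<card E}"
    by (simp add: bij_betw_def)
  obtain b :: "nat \<Rightarrow> 'a" where b: "F2_independent b {..<r + m * card E}"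
    using ex_F2_independent[OF char2 assms(2)] assms(5) by (auto simp: m_def E_def)
  obtain \<beta> where \<beta>: "F2_basis (GF r) \<beta> r"
    using ex_F2_basis_GF[OF assms(3)] by blast
  obtain \<kappa> where \<kappa>: "0 < m \<Longrightarrow> F2_basis (GF m) \<kappa> m"
    using ex_F2_basis_GF by (cases "0 < m") blast+
  obtain \<alpha> where \<alpha>: "\<forall>g. \<alpha> g \<in> GF m" "inj_on \<alpha> {..<num_groups k r h}"
    using ex_inj_into_GF[OF m_param(2)[of r k h, OF assms(3)]] by (auto simp: m_def)
  interpret labelling_construction k r h m "card E" \<beta> \<kappa> \<alpha> b exps
    using assms(3,4) char2 m_param[of r k h, OF assms(3)] \<beta> \<kappa> \<alpha> b exps
    by (intro labelling_construction.intro blocks.intro labelling_construction_axioms.intro)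
      (simp_all add: m_def E_def)
  show ?thesis
    using good_labelling by blast
qed

theorem theorem15:
  fixes k r h :: nat
  assumes "0 < k" "0 < r" "0 < h" "r dvd (k + h)"
    and "card (UNIV :: 'a::{field,finite} set) = 2 ^ t_param k r h"
  shows "\<exists>(P :: nat \<Rightarrow> nat \<Rightarrow> 'a::{field,finite}) grp. max_recoverable_local_code k r h P grp"
proof -
  have "0 < t_param k r h"
    using assms(2) by (simp add: t_param_def)
  then have char2: "CHAR('a) = 2"
    using card_pow2_imp_CHAR_2 assms(5) by blast
  have "card {e. 0 < e \<and> e < h \<and> \<not> 2 ^ r dvd e} \<le> nat \<lceil>(real h - 1) * (1 - 1 / 2 ^ r)\<rceil>"
    using card_exponents_le[OF assms(2,3)] .
  then have "r + m_param k r h * card {e. 0 < e \<and> e < h \<and> \<not> 2 ^ r dvd e} \<le> t_param k r h"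
    by (simp add: t_param_def)
  then have "2 ^ (r + m_param k r h * card {e. 0 < e \<and> e < h \<and> \<not> 2 ^ r dvd e}) \<le> card (UNIV :: 'a set)"
    unfolding assms(5) by (rule power_increasing) simp
  then obtain \<mu> :: "nat \<Rightarrow> 'a" where "good_labelling k r h \<mu>"
    using ex_good_labelling[OF char2 finite_UNIV assms(2,4)] by blast
  then obtain P :: "nat \<Rightarrow> nat \<Rightarrow> 'a" where "max_recoverable_local_code k r h P (\<lambda>i. i div r)"
    using ex_max_recoverable_if_good_labelling[OF char2 assms(1,2,4)] by blast
  then show ?thesis
    by blast
qed

end
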